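(* For every $\Delta\in\mathbb{N}$ there exists $k_0$ such that for all $k\ge k_0$ the following holds. Let $T$ be a tree with $k$ edges and $\Delta(T)\le\Delta$. Then there exist a matching $M$, a tree $S$ and a forest $F$, all subgraphs of $T$, whose edge sets form a partition of $E(T)$, such that: (a) $S$ and $F$ are vertex-disjoint; (b) every edge of $M$ has exactly one endpoint in $S$ and one endpoint in $F$; (c) $S$ and every component of $F$ each have at most $\lceil k/2\rceil$ vertices; (d) all vertices of $V(M)\cap V(S)$ belong to the same bipartition class of $T$; (e) the smallest subtree of $S$ containing $V(M)\cap V(S)$ has at most $\Delta^{4\Delta+1}$ vertices.
   Context: A matching is a set of pairwise vertex-disjoint edges, viewed as a subgraph. $\Delta(T)$ is the maximum degree of $T$. *)

theory Defs
  imports Complex_Main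
begin

definition ugraph :: "'a set \<Rightarrow> 'a set set \<Rightarrow> bool" where
  "ugraph V E \<longleftrightarrow> finite V \<and> (\<forall>e\<in>E. \<exists>u v. u \<in> V \<and> v \<in> V \<and> u \<noteq> v \<and> e = {u, v})"

definition reach :: "'a set set \<Rightarrow> 'a \<Rightarrow> 'a \<Rightarrow> bool" where
  "reach E = (\<lambda>u v. {u, v} \<in> E)\<^sup>*\<^sup>*"

definition connected_graph :: "'a set \<Rightarrow> 'a set set \<Rightarrow> bool" where
  "connected_graph V E \<longleftrightarrow> V \<noteq> {} \<and> (\<forall>u\<in>V. \<forall>v\<in>V. reach E u v)"

definition is_cycle :: "'a set set \<Rightarrow> 'a list \<Rightarrow> bool" where
  "is_cycle E xs \<longleftrightarrow> length xs \<ge> 3 \<and> distinct xs \<and>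
     (\<forall>i. Suc i < length xs \<longrightarrow> {xs ! i, xs ! Suc i} \<in> E) \<and> {last xs, hd xs} \<in> E"

definition forest :: "'a set \<Rightarrow> 'a set set \<Rightarrow> bool" where
  "forest V E \<longleftrightarrow> ugraph V E \<and> \<not> (\<exists>xs. is_cycle E xs)"

definition tree :: "'a set \<Rightarrow> 'a set set \<Rightarrow> bool" where
  "tree V E \<longleftrightarrow> forest V E \<and> connected_graph V E"

definition subgraph :: "'a set \<Rightarrow> 'a set set \<Rightarrow> 'a set \<Rightarrow> 'a set set \<Rightarrow> bool" where
  "subgraph V' E' V E \<longleftrightarrow> ugraph V' E' \<and> V' \<subseteq> V \<and> E' \<subseteq> E"

definition max_degree_le :: "'a set \<Rightarrow> 'a set set \<Rightarrow> nat \<Rightarrow> bool" where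
  "max_degree_le V E d \<longleftrightarrow> (\<forall>v\<in>V. card {e\<in>E. v \<in> e} \<le> d)"

text \<open>A matching (as a set of edges); its vertex set is the union of its edges.\<close>
definition matching :: "'a set set \<Rightarrow> bool" where
  "matching M \<longleftrightarrow> (\<forall>e\<in>M. \<forall>e'\<in>M. e \<noteq> e' \<longrightarrow> e \<inter> e' = {})"

definition component :: "'a set \<Rightarrow> 'a set set \<Rightarrow> 'a \<Rightarrow> 'a set" where
  "component V E v = {u\<in>V. reach E v u}"

definition same_bip_class :: "'a set \<Rightarrow> 'a set set \<Rightarrow> 'a set \<Rightarrow> bool" where
  "same_bip_class V E X \<longleftrightarrow> (\<exists>c :: 'a \<Rightarrow> bool. (\<forall>u v. {u, v} \<in> E \<longrightarrow> c u \<noteq> c v) \<and> (\<forall>x\<in>X. c x))"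

definition min_subtree_card :: "'a set \<Rightarrow> 'a set set \<Rightarrow> 'a set \<Rightarrow> nat" where
  "min_subtree_card V E X = (LEAST n. \<exists>V' E'. subgraph V' E' V E \<and> tree V' E' \<and> X \<subseteq> V' \<and> n = card V')"

end

theory Submission
  imports Defs
begin

text \<open>
Root the tree at a centroid c, so that every branch at c has at most half of the vertices, and
2-colour it. Walking down from c, at every odd depth cut the edge to the heaviest child: that edge
goes into M and the subtree below it into F. Stop cutting at depth 4\<Delta>; what remains is a subtree
S containing c. A vertex has at most \<Delta> children and the heaviest child branch carries at least a
1/\<Delta> share of their weight, so each cutting level keeps at most a (1 - 1/\<Delta>) fraction of it.
After 2\<Delta> cutting levels at most (1 - 1/\<Delta>)^(2\<Delta>) \<le> 1/4 of the vertices survive below depth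
4\<Delta>, while above that depth S has at most (\<Delta> + 1)^(4\<Delta>) vertices; so S has at most half of the
vertices once T is large. Every component of F lies in a branch at c and is small as well. The
S-endpoints of M all have odd depth, hence one colour, and lie in the top 4\<Delta> levels of S, a
subtree with at most \<Delta>^(4\<Delta> + 1) vertices.
\<close>

lemma nat_ceiling_half: "nat \<lceil>real k / 2\<rceil> = (k + 1) div 2"
  by linarith

lemma one_minus_inverse_power_le_half:
  assumes "1 \<le> D"
  shows "(1 - 1 / real D) ^ D \<le> 1 / 2"
proof -
  have "(1 - 1 / real D) ^ D \<le> exp (- 1 / real D) ^ D"
    using assms exp_ge_add_one_self[of "- 1 / real D"] by (intro power_mono) auto
  also have "\<dots> = exp (- 1)"
    using assms by (simp flip: exp_of_nat_mult)
  also have "\<dots> \<le> 1 / 2"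
    using exp_ge_add_one_self[of 1] by (simp add: exp_minus')
  finally show ?thesis .
qed

lemma one_plus_mult_power_le:
  assumes "k \<le> D"
  shows "1 + real k * real (D + 1) ^ l \<le> real (D + 1) ^ Suc l"
proof -
  have "real k * real (D + 1) ^ l \<le> real D * real (D + 1) ^ l"
    using assms by (intro mult_right_mono) simp_all
  moreover have "1 \<le> real (D + 1) ^ l"
    by simp
  moreover have "real (D + 1) ^ Suc l = real (D + 1) ^ l + real D * real (D + 1) ^ l"
    by (simp add: algebra_simps)
  ultimately show ?thesis
    by linarith
qed

lemma reach_refl [simp]: "reach E u u"
  unfolding reach_def by simp

lemma reach_edge: "{u, v} \<in> E \<Longrightarrow> reach E u v"
  unfolding reach_def by (simp add: r_into_rtranclp)

lemma reach_trans: "reach E u v \<Longrightarrow> reach E v w \<Longrightarrow> reach E u w"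
  unfolding reach_def by (rule rtranclp_trans)

lemma reach_sym: "reach E u v \<Longrightarrow> reach E v u"
  unfolding reach_def by (rule sympD[OF symp_rtranclp]) (auto intro: sympI simp: insert_commute)

lemma reach_mono: "reach E u v \<Longrightarrow> E \<subseteq> E' \<Longrightarrow> reach E' u v"
  unfolding reach_def by (erule rtranclp_mono[THEN predicate2D, rotated]) auto

lemma reach_closed_set:
  assumes "reach E a b" "a \<in> C" "\<And>x y. x \<in> C \<Longrightarrow> {x, y} \<in> E \<Longrightarrow> y \<in> C"
  shows "b \<in> C"
  using assms(1,2) unfolding reach_def
  by (induction rule: rtranclp_induct) (use assms(3) in blast)+

lemma reach_within_closed_set:
  assumes "reach E a b" "a \<in> C" "\<And>x y. x \<in> C \<Longrightarrow> {x, y} \<in> E \<Longrightarrow> y \<in> C"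
  shows "reach {e \<in> E. e \<subseteq> C} a b"
proof -
  from assms(1) have "b \<in> C \<and> reach {e \<in> E. e \<subseteq> C} a b"
    unfolding reach_def[of E]
  proof (induction rule: rtranclp_induct)
    case (step y z)
    with assms(3) show ?case
      unfolding reach_def by (auto intro: rtranclp.rtrancl_into_rtrancl)
  qed (simp add: assms(2))
  then show ?thesis ..
qed

lemma reach_insert_UN:
  assumes "x \<in> insert v (\<Union>w\<in>W. Y w)" "\<And>w. w \<in> W \<Longrightarrow> {v, w} \<in> E"
    "\<And>w y. w \<in> W \<Longrightarrow> y \<in> Y w \<Longrightarrow> reach {e \<in> E. e \<subseteq> Y w} w y"
  shows "reach {e \<in> E. e \<subseteq> insert v (\<Union>w\<in>W. Y w)} v x"
proof (cases "x = v")
  case False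
  with assms(1) obtain w where w: "w \<in> W" "x \<in> Y w"
    by blast
  have "reach {e \<in> E. e \<subseteq> Y w} x w"
    using assms(3)[OF w] by (rule reach_sym)
  then have "w \<in> Y w"
    using w(2) by (rule reach_closed_set) blast
  then have "{v, w} \<in> {e \<in> E. e \<subseteq> insert v (\<Union>w\<in>W. Y w)}"
    using assms(2) w(1) by blast
  moreover have "reach {e \<in> E. e \<subseteq> insert v (\<Union>w\<in>W. Y w)} w x"
    using assms(3)[OF w] by (rule reach_mono) (use w(1) in blast)
  ultimately show ?thesis
    by (blast intro: reach_trans reach_edge)
qed simp

lemma reach_imp_distinct_walk:
  assumes "reach E a b"
  obtains xs where "xs \<noteq> []" "hd xs = a" "last xs = b" "distinct xs"
    "successively (\<lambda>x y. {x, y} \<in> E) xs"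
proof -
  from assms have "\<exists>xs. xs \<noteq> [] \<and> hd xs = a \<and> last xs = b \<and> distinct xs \<and>
      successively (\<lambda>x y. {x, y} \<in> E) xs"
    unfolding reach_def
  proof (induction rule: converse_rtranclp_induct)
    case base
    show ?case by (intro exI[of _ "[b]"]) simp
  next
    case (step a y)
    then obtain ys where ys: "ys \<noteq> []" "hd ys = y" "last ys = b" "distinct ys"
      "successively (\<lambda>x y. {x, y} \<in> E) ys" by blast
    show ?case
    proof (cases "a \<in> set ys")
      case True
      then obtain us ws where "ys = us @ a # ws" by (meson split_list)
      with ys show ?thesis
        by (intro exI[of _ "a # ws"]) (auto simp: successively_append_iff)
    next
      case False
      with ys step(1) show ?thesis
        by (intro exI[of _ "a # ys"]) (auto simp: successively_Cons)
    qed
  qed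
  then show ?thesis using that by blast
qed

lemma forest_edge_removal_disconnects:
  assumes "forest V E" "{p, v} \<in> E"
  shows "\<not> reach (E - {{p, v}}) v p"
proof
  assume "reach (E - {{p, v}}) v p"
  then obtain xs where xs: "xs \<noteq> []" "hd xs = v" "last xs = p" "distinct xs"
    and walk: "successively (\<lambda>x y. {x, y} \<in> E - {{p, v}}) xs"
    by (rule reach_imp_distinct_walk)
  have "p \<noteq> v"
    using assms unfolding forest_def ugraph_def by (fastforce simp: doubleton_eq_iff)
  show False
  proof (cases "length xs \<ge> 3")
    case True
    have "{last xs, hd xs} \<in> E"
      using xs assms(2) by (simp add: insert_commute)
    moreover have "\<forall>i. Suc i < length xs \<longrightarrow> {xs ! i, xs ! Suc i} \<in> E"
      using successively_nth[OF walk] by blast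
    ultimately have "is_cycle E xs"
      unfolding is_cycle_def using True xs(4) by blast
    then show False
      using assms(1) unfolding forest_def by blast
  next
    case False
    with xs \<open>p \<noteq> v\<close> have "xs = [v, p]"
      by (cases xs; cases "tl xs"; cases "tl (tl xs)") auto
    with walk show False
      by (simp add: insert_commute)
  qed
qed

lemma matching_UN_disjoint:
  assumes "\<And>i. i \<in> I \<Longrightarrow> matching (M i)" "\<And>i. i \<in> I \<Longrightarrow> \<Union>(M i) \<subseteq> B i"
    "\<And>i j. i \<in> I \<Longrightarrow> j \<in> I \<Longrightarrow> i \<noteq> j \<Longrightarrow> B i \<inter> B j = {}"
  shows "matching (\<Union>i\<in>I. M i)"
  unfolding matching_def
proof (intro ballI impI)
  fix e e' assume "e \<in> (\<Union>i\<in>I. M i)" "e' \<in> (\<Union>i\<in>I. M i)" "e \<noteq> e'"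
  then obtain i j where ij: "i \<in> I" "j \<in> I" "e \<in> M i" "e' \<in> M j" by blast
  show "e \<inter> e' = {}"
  proof (cases "i = j")
    case True
    with ij assms(1) \<open>e \<noteq> e'\<close> show ?thesis
      unfolding matching_def by blast
  next
    case False
    have "e \<subseteq> B i" "e' \<subseteq> B j"
      using ij assms(2) by blast+
    with assms(3)[OF ij(1,2) False] show ?thesis by blast
  qed
qed

lemma matching_insert: "matching M \<Longrightarrow> e \<inter> \<Union>M = {} \<Longrightarrow> matching (insert e M)"
  unfolding matching_def by (simp add: Int_commute disjoint_iff) blast

lemma ugraph_induced:
  assumes "ugraph V E" "W \<subseteq> V"
  shows "ugraph W {e \<in> E. e \<subseteq> W}"
  unfolding ugraph_def
proof (intro conjI ballI)
  show "finite W"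
    using assms finite_subset unfolding ugraph_def by blast
  fix e assume e: "e \<in> {e \<in> E. e \<subseteq> W}"
  then have "e \<in> E" "e \<subseteq> W" by simp_all
  then show "\<exists>u v. u \<in> W \<and> v \<in> W \<and> u \<noteq> v \<and> e = {u, v}"
    using assms(1) unfolding ugraph_def by (metis insert_subset)
qed

lemma subgraph_induced: "ugraph V E \<Longrightarrow> W \<subseteq> V \<Longrightarrow> subgraph W {e \<in> E. e \<subseteq> W} V E"
  unfolding subgraph_def by (simp add: ugraph_induced)

lemma forest_induced: "forest V E \<Longrightarrow> W \<subseteq> V \<Longrightarrow> forest W {e \<in> E. e \<subseteq> W}"
  unfolding forest_def is_cycle_def by (auto simp: ugraph_induced)

lemma tree_induced:
  assumes "forest V E" "W \<subseteq> V" "w \<in> W" "\<And>x. x \<in> W \<Longrightarrow> reach {e \<in> E. e \<subseteq> W} w x"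
  shows "tree W {e \<in> E. e \<subseteq> W}"
  unfolding tree_def connected_graph_def
proof (intro conjI ballI)
  show "forest W {e \<in> E. e \<subseteq> W}"
    using assms(1,2) by (rule forest_induced)
  show "W \<noteq> {}"
    using assms(3) by blast
  fix x y assume "x \<in> W" "y \<in> W"
  then show "reach {e \<in> E. e \<subseteq> W} x y"
    using assms(4) by (blast intro: reach_trans reach_sym)
qed

lemma min_subtree_card_le:
  "subgraph W F VS ES \<Longrightarrow> tree W F \<Longrightarrow> X \<subseteq> W \<Longrightarrow> min_subtree_card VS ES X \<le> card W"
  unfolding min_subtree_card_def by (intro Least_le exI conjI) (assumption | rule refl)+

lemma split_edges_by_sides:
  assumes "S \<inter> F = {}" "{} \<notin> E" "\<And>e. e \<in> E \<Longrightarrow> e \<subseteq> S \<or> e \<subseteq> F \<or> e \<in> M"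
    "\<And>e. e \<in> M \<Longrightarrow> \<exists>a h. e = {a, h} \<and> e \<in> E \<and> a \<in> S \<and> h \<in> F"
  shows "M \<union> {e \<in> E. e \<subseteq> S} \<union> {e \<in> E. e \<subseteq> F} = E"
    and "M \<inter> {e \<in> E. e \<subseteq> S} = {}" and "M \<inter> {e \<in> E. e \<subseteq> F} = {}"
    and "{e \<in> E. e \<subseteq> S} \<inter> {e \<in> E. e \<subseteq> F} = {}"
    and "\<forall>e\<in>M. card (e \<inter> S) = 1 \<and> card (e \<inter> F) = 1"
proof -
  have M: "e \<in> E \<and> e \<inter> S \<noteq> {} \<and> e \<inter> F \<noteq> {} \<and> card (e \<inter> S) = 1 \<and> card (e \<inter> F) = 1"
    if e: "e \<in> M" for e
  proof -
    obtain a h where ah: "e = {a, h}" "e \<in> E" "a \<in> S" "h \<in> F"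
      using assms(4)[OF e] by blast
    moreover have "a \<notin> F" "h \<notin> S"
      using assms(1) ah(3,4) by blast+
    ultimately have "e \<inter> S = {a}" "e \<inter> F = {h}"
      by auto
    with ah(2) show ?thesis
      by simp
  qed
  then show "M \<union> {e \<in> E. e \<subseteq> S} \<union> {e \<in> E. e \<subseteq> F} = E"
    and "M \<inter> {e \<in> E. e \<subseteq> S} = {}" and "M \<inter> {e \<in> E. e \<subseteq> F} = {}"
    and "\<forall>e\<in>M. card (e \<inter> S) = 1 \<and> card (e \<inter> F) = 1"
    using assms(1,3) by blast+
  have "e = {}" if "e \<subseteq> S" "e \<subseteq> F" for e
    using that assms(1) by blast
  with assms(2) show "{e \<in> E. e \<subseteq> S} \<inter> {e \<in> E. e \<subseteq> F} = {}"
    by blast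
qed

section \<open>Branches of a tree\<close>

locale tree_graph =
  fixes V :: "'a set" and E :: "'a set set"
  assumes tree: "tree V E"
begin

lemma forest: "forest V E"
  using tree unfolding tree_def by blast

lemma ugraph: "ugraph V E"
  using forest unfolding forest_def by blast

lemma finite_V: "finite V"
  using ugraph unfolding ugraph_def by blast

lemma V_nonempty: "V \<noteq> {}"
  using tree unfolding tree_def connected_graph_def by blast

lemma connected: "u \<in> V \<Longrightarrow> v \<in> V \<Longrightarrow> reach E u v"
  using tree unfolding tree_def connected_graph_def by blast

lemma edge_cases:
  assumes "e \<in> E"
  obtains u v where "u \<in> V" "v \<in> V" "u \<noteq> v" "e = {u, v}"
  using assms ugraph unfolding ugraph_def by blast

lemma edge_vertices:
  assumes "{u, v} \<in> E"
  shows "u \<in> V" "v \<in> V" "u \<noteq> v"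
  using assms by (auto elim!: edge_cases simp: doubleton_eq_iff)

lemma self_loop_notin_E: "{v} \<notin> E"
  using edge_vertices(3)[of v v] by auto

lemma finite_E: "finite E"
proof -
  have "E \<subseteq> Pow V"
    by (auto elim: edge_cases)
  then show ?thesis
    using finite_V by (meson finite_Pow_iff finite_subset)
qed

definition nbrs :: "'a \<Rightarrow> 'a set" where
  "nbrs v = {w. {v, w} \<in> E}"

lemma nbrs_subset_V: "nbrs v \<subseteq> V"
  unfolding nbrs_def using edge_vertices by blast

lemma finite_nbrs: "finite (nbrs v)"
  using nbrs_subset_V finite_V by (rule finite_subset)

lemma card_nbrs_le:
  assumes "max_degree_le V E D" "v \<in> V"
  shows "card (nbrs v) \<le> D"
proof -
  have "(\<lambda>w. {v, w}) ` nbrs v = {e \<in> E. v \<in> e}"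
  proof (intro equalityI subsetI)
    fix e assume e: "e \<in> {e \<in> E. v \<in> e}"
    then obtain a b where "e = {a, b}"
      by (metis (no_types, lifting) edge_cases mem_Collect_eq)
    with e have "e = {v, if a = v then b else a}" "e \<in> E"
      by auto
    then show "e \<in> (\<lambda>w. {v, w}) ` nbrs v"
      unfolding nbrs_def by (metis (no_types, lifting) image_eqI mem_Collect_eq)
  qed (auto simp: nbrs_def)
  moreover have "inj_on (\<lambda>w. {v, w}) (nbrs v)"
    by (auto simp: inj_on_def doubleton_eq_iff)
  ultimately have "card (nbrs v) = card {e \<in> E. v \<in> e}"
    by (metis card_image)
  with assms show ?thesis
    unfolding max_degree_le_def by simp
qed

definition children :: "'a \<Rightarrow> 'a \<Rightarrow> 'a set" where
  "children p v = nbrs v - {p}"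

lemma finite_children: "finite (children p v)"
  unfolding children_def using finite_nbrs by simp

lemma children_edge: "w \<in> children p v \<Longrightarrow> {v, w} \<in> E"
  unfolding children_def nbrs_def by simp

lemma children_in_V: "w \<in> children p v \<Longrightarrow> w \<in> V"
  using children_edge edge_vertices by blast

lemma children_self: "children v v = nbrs v"
  unfolding children_def nbrs_def using self_loop_notin_E by auto

lemma card_children_le:
  assumes "max_degree_le V E D" "v \<in> V"
  shows "card (children p v) \<le> D"
  using card_nbrs_le[OF assms] card_Diff1_le[of "nbrs v" p]
  unfolding children_def by linarith

lemma card_children_less:
  assumes "max_degree_le V E D" "{p, v} \<in> E"
  shows "card (children p v) < D"
proof -
  have "p \<in> nbrs v"
    using assms(2) unfolding nbrs_def by (simp add: insert_commute)
  then show ?thesis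
    using card_nbrs_le[OF assms(1) edge_vertices(2)[OF assms(2)]]
      card_Diff1_less[OF finite_nbrs]
    unfolding children_def by (metis order.strict_trans2)
qed

text \<open>If \<open>{p, v}\<close> is not an edge, in particular if \<open>p = v\<close>, this is all of \<open>V\<close>:
  \<open>branch v v\<close> is the tree rooted at \<open>v\<close>.\<close>

definition branch :: "'a \<Rightarrow> 'a \<Rightarrow> 'a set" where
  "branch p v = {u \<in> V. reach (E - {{p, v}}) v u}"

lemma branch_subset_V: "branch p v \<subseteq> V"
  unfolding branch_def by blast

lemma finite_branch: "finite (branch p v)"
  using branch_subset_V finite_V by (rule finite_subset)

lemma root_in_branch: "v \<in> V \<Longrightarrow> v \<in> branch p v"
  unfolding branch_def by simp

lemma branch_self: "v \<in> V \<Longrightarrow> branch v v = V"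
  unfolding branch_def using connected self_loop_notin_E by auto

lemma branch_closed:
  assumes "x \<in> branch p v" "{x, y} \<in> E" "{x, y} \<noteq> {p, v}"
  shows "y \<in> branch p v"
  using assms edge_vertices(2)[OF assms(2)] unfolding branch_def
  by (blast intro: reach_trans reach_edge)

lemma parent_notin_branch: "{p, v} \<in> E \<Longrightarrow> p \<notin> branch p v"
  unfolding branch_def using forest_edge_removal_disconnects[OF forest] by blast

lemma root_notin_child_branch: "w \<in> children p v \<Longrightarrow> v \<notin> branch v w"
  using parent_notin_branch children_edge by blast

lemma branch_connected:
  assumes "v \<in> V" "x \<in> branch p v"
  shows "reach {e \<in> E. e \<subseteq> branch p v} v x"
proof -
  have "reach {e \<in> E - {{p, v}}. e \<subseteq> branch p v} v x"
    using assms(2) unfolding branch_def[of p v, THEN eqset_imp_iff, of x]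
    by (intro reach_within_closed_set) (auto intro: branch_closed root_in_branch assms(1))
  then show ?thesis
    by (rule reach_mono) blast
qed

lemma child_branch_subset:
  assumes "v \<in> V" "w \<in> children p v"
  shows "branch v w \<subseteq> branch p v"
proof
  let ?C = "branch v w \<inter> branch p v"
  fix x assume "x \<in> branch v w"
  then have "reach (E - {{v, w}}) w x"
    unfolding branch_def by simp
  moreover have "w \<in> ?C"
  proof -
    have "w \<noteq> p" "w \<noteq> v"
      using assms(2) edge_vertices(3)[OF children_edge[OF assms(2)]]
      unfolding children_def by auto
    then have "{v, w} \<noteq> {p, v}"
      by (auto simp: doubleton_eq_iff)
    then show ?thesis
      using branch_closed[OF root_in_branch[OF assms(1)] children_edge[OF assms(2)]]
        root_in_branch[OF children_in_V[OF assms(2)]] by blast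
  qed
  moreover have "y \<in> ?C" if z: "z \<in> ?C" and zy: "{z, y} \<in> E - {{v, w}}" for z y
  proof -
    have "z \<noteq> v"
      using z root_notin_child_branch[OF assms(2)] by blast
    moreover have "{p, v} \<in> E \<Longrightarrow> z \<noteq> p"
      using z parent_notin_branch by blast
    ultimately have "{z, y} \<noteq> {p, v}"
      using zy by (auto simp: doubleton_eq_iff)
    then show ?thesis
      using z zy branch_closed[of z v w y] branch_closed[of z p v y] by blast
  qed
  ultimately show "x \<in> branch p v"
    using reach_closed_set[where C = ?C] by blast
qed

lemma branch_decomp:
  assumes "v \<in> V"
  shows "branch p v = insert v (\<Union>w\<in>children p v. branch v w)" (is "_ = ?R")
proof (rule equalityI)
  show "branch p v \<subseteq> ?R"
  proof
    fix x assume "x \<in> branch p v"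
    then have reach: "reach (E - {{p, v}}) v x"
      unfolding branch_def by simp
    have closed: "b \<in> ?R" if a: "a \<in> ?R" and ab: "{a, b} \<in> E - {{p, v}}" for a b
    proof (cases "a = v")
      case True
      then have b: "b \<in> children p v"
        using ab unfolding children_def nbrs_def by auto
      then have "b \<in> branch v b"
        by (intro root_in_branch children_in_V)
      with b show ?thesis
        by blast
    next
      case False
      with a obtain w where w: "w \<in> children p v" "a \<in> branch v w"
        by blast
      show ?thesis
      proof (cases "b = v")
        case False
        with \<open>a \<noteq> v\<close> have "{a, b} \<noteq> {v, w}"
          by (simp add: doubleton_eq_iff)
        then have "b \<in> branch v w"
          using branch_closed[OF w(2)] ab by blast
        with w(1) show ?thesis
          by blast
      qed simp
    qed
    show "x \<in> ?R"
      using reach_closed_set[OF reach _ closed] by simp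
  qed
  show "?R \<subseteq> branch p v"
    using root_in_branch[OF assms] child_branch_subset[OF assms] by blast
qed

lemma child_branches_disjoint:
  assumes "w \<in> children p v" "w' \<in> children p v" "w \<noteq> w'"
  shows "branch v w \<inter> branch v w' = {}"
proof (rule ccontr)
  assume "branch v w \<inter> branch v w' \<noteq> {}"
  then obtain x where x: "x \<in> branch v w" "x \<in> branch v w'"
    by blast
  have "reach {e \<in> E. e \<subseteq> branch v w} x w"
    using branch_connected[OF children_in_V[OF assms(1)] x(1)] by (rule reach_sym)
  then have "reach (E - {{v, w'}}) x w"
    by (rule reach_mono) (use root_notin_child_branch[OF assms(1)] in blast)
  with x(2) have "w \<in> branch v w'"
    unfolding branch_def using children_in_V[OF assms(1)] by (blast intro: reach_trans)
  moreover have "{w, v} \<in> E" "{w, v} \<noteq> {v, w'}"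
    using children_edge[OF assms(1)] assms(3) by (auto simp: insert_commute doubleton_eq_iff)
  ultimately have "v \<in> branch v w'"
    by (rule branch_closed)
  with root_notin_child_branch[OF assms(2)] show False ..
qed

lemma branches_across_edge_disjoint:
  assumes "{p, v} \<in> E"
  shows "branch p v \<inter> branch v p = {}"
proof -
  have "\<not> reach (E - {{p, v}}) v p"
    using forest_edge_removal_disconnects[OF forest assms] .
  then show ?thesis
    unfolding branch_def by (auto simp: insert_commute dest: reach_sym intro: reach_trans)
qed

lemma edge_in_branch_cases:
  assumes "v \<in> V" "e \<in> E" "e \<subseteq> branch p v"
  obtains w where "w \<in> children p v" "e = {v, w}"
    | w where "w \<in> children p v" "e \<subseteq> branch v w"
proof (cases "v \<in> e")
  case True
  obtain x y where "e = {x, y}"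
    using assms(2) by (rule edge_cases)
  with True obtain w where w: "e = {v, w}"
    by blast
  have "w \<noteq> p"
  proof
    assume "w = p"
    with assms(2) w have "{p, v} \<in> E" "p \<in> branch p v"
      using assms(3) by (auto simp: insert_commute)
    then show False
      using parent_notin_branch by blast
  qed
  with assms(2) w have "w \<in> children p v"
    unfolding children_def nbrs_def by simp
  with w show ?thesis
    using that(1) by blast
next
  case False
  obtain x y where e: "e = {x, y}"
    using assms(2) by (rule edge_cases)
  with False assms(3) have "x \<in> branch p v - {v}"
    by blast
  then obtain w where w: "w \<in> children p v" "x \<in> branch v w"
    unfolding branch_decomp[OF assms(1), of p] by blast
  from False e have "{x, y} \<noteq> {v, w}"
    by blast
  then have "y \<in> branch v w"
    using branch_closed[OF w(2)] assms(2) e by blast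
  with w e show ?thesis
    using that(2) by blast
qed

lemma card_branch:
  assumes "v \<in> V"
  shows "card (branch p v) = 1 + (\<Sum>w\<in>children p v. card (branch v w))"
proof -
  have "card (\<Union>w\<in>children p v. branch v w) = (\<Sum>w\<in>children p v. card (branch v w))"
    using finite_children finite_branch child_branches_disjoint by (intro card_UN_disjoint) auto
  moreover have "v \<notin> (\<Union>w\<in>children p v. branch v w)"
    using root_notin_child_branch by blast
  ultimately show ?thesis
    using branch_decomp[OF assms] finite_children finite_branch by simp
qed

lemma card_child_branch_less:
  assumes "v \<in> V" "w \<in> children p v"
  shows "card (branch v w) < card (branch p v)"
proof -
  have "branch v w \<subseteq> branch p v - {v}"
    using child_branch_subset[OF assms] root_notin_child_branch[OF assms(2)] by blast
  then have "card (branch v w) \<le> card (branch p v - {v})"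
    using finite_branch by (intro card_mono) auto
  also have "\<dots> < card (branch p v)"
    using finite_branch root_in_branch[OF assms(1)] by (rule card_Diff1_less)
  finally show ?thesis .
qed

lemma edges_in_branch:
  assumes "v \<in> V"
  shows "{e \<in> E. e \<subseteq> branch p v} =
    (\<lambda>w. {v, w}) ` children p v \<union> (\<Union>w\<in>children p v. {e \<in> E. e \<subseteq> branch v w})"
proof (intro equalityI subsetI)
  fix e assume "e \<in> {e \<in> E. e \<subseteq> branch p v}"
  then have "e \<in> E" "e \<subseteq> branch p v"
    by simp_all
  with assms show "e \<in> (\<lambda>w. {v, w}) ` children p v \<union> (\<Union>w\<in>children p v. {e \<in> E. e \<subseteq> branch v w})"
  proof (cases rule: edge_in_branch_cases)
    case (1 w)
    then show ?thesis by blast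
  next
    case (2 w)
    with \<open>e \<in> E\<close> show ?thesis by blast
  qed
next
  fix e assume "e \<in> (\<lambda>w. {v, w}) ` children p v \<union> (\<Union>w\<in>children p v. {e \<in> E. e \<subseteq> branch v w})"
  then consider w where "w \<in> children p v" "e = {v, w}"
    | w where "w \<in> children p v" "e \<in> E" "e \<subseteq> branch v w"
    by blast
  then show "e \<in> {e \<in> E. e \<subseteq> branch p v}"
  proof cases
    case 1
    then have "w \<in> branch p v"
      using child_branch_subset[OF assms] root_in_branch[OF children_in_V] by blast
    with 1 show ?thesis
      using children_edge root_in_branch[OF assms] by blast
  next
    case 2
    then show ?thesis
      using child_branch_subset[OF assms] by blast
  qed
qed

lemma card_edges_in_branch:
  assumes "v \<in> V"
  shows "card {e \<in> E. e \<subseteq> branch p v} + 1 = card (branch p v)"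
  using assms
proof (induction "card (branch p v)" arbitrary: p v rule: less_induct)
  case less
  let ?F = "\<lambda>w. {e \<in> E. e \<subseteq> branch v w}"
  have IH: "card (?F w) + 1 = card (branch v w)" if "w \<in> children p v" for w
    using less.hyps[OF card_child_branch_less[OF less.prems that] children_in_V[OF that]] .
  have finite_F: "finite (?F w)" for w
    using finite_E by simp
  have "card ((\<lambda>w. {v, w}) ` children p v) = card (children p v)"
    by (rule card_image) (auto simp: inj_on_def doubleton_eq_iff)
  moreover have "card (\<Union>w\<in>children p v. ?F w) = (\<Sum>w\<in>children p v. card (?F w))"
  proof (rule card_UN_disjoint[OF finite_children])
    show "\<forall>w\<in>children p v. \<forall>w'\<in>children p v. w \<noteq> w' \<longrightarrow> ?F w \<inter> ?F w' = {}"
      using child_branches_disjoint by (fastforce elim: edge_cases)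
  qed (use finite_F in blast)
  moreover have "(\<lambda>w. {v, w}) ` children p v \<inter> (\<Union>w\<in>children p v. ?F w) = {}"
    using root_notin_child_branch by blast
  ultimately have "card {e \<in> E. e \<subseteq> branch p v}
      = card (children p v) + (\<Sum>w\<in>children p v. card (?F w))"
    unfolding edges_in_branch[OF less.prems]
    by (simp add: card_Un_disjoint finite_children finite_F)
  also have "\<dots> = (\<Sum>w\<in>children p v. 1 + card (?F w))"
    by (subst sum.distrib) simp
  also have "\<dots> = (\<Sum>w\<in>children p v. card (branch v w))"
    using IH by (intro sum.cong) auto
  finally show ?case
    using card_branch[OF less.prems, of p] by simp
qed

lemma card_V_eq_card_E_plus_1: "card V = card E + 1"
proof -
  obtain v where "v \<in> V"
    using V_nonempty by blast
  moreover have "{e \<in> E. e \<subseteq> V} = E"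
    by (auto elim: edge_cases)
  ultimately show ?thesis
    using card_edges_in_branch[of v v] branch_self by simp
qed

text \<open>Minimise the size \<open>\<mu> c\<close> of the largest branch at \<open>c\<close>: if a branch at \<open>c\<close> had more than
  half of the vertices, its root \<open>w\<close> would have \<open>\<mu> w < \<mu> c\<close>.\<close>

lemma centroid_exists:
  obtains c where "c \<in> V" "\<And>w. w \<in> nbrs c \<Longrightarrow> card (branch c w) \<le> card V div 2"
proof -
  define \<mu> where "\<mu> c = Max (insert 0 ((\<lambda>w. card (branch c w)) ` nbrs c))" for c
  have \<mu>_ge: "card (branch c w) \<le> \<mu> c" if "w \<in> nbrs c" for c w
    unfolding \<mu>_def using that finite_nbrs by (intro Max_ge) auto
  obtain c0 where "c0 \<in> V"
    using V_nonempty by blast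
  then obtain c where c: "c \<in> V" and min: "\<And>y. y \<in> V \<Longrightarrow> \<mu> c \<le> \<mu> y"
    using ex_has_least_nat[of "\<lambda>x. x \<in> V" c0 \<mu>] by blast
  have "card (branch c w) \<le> card V div 2" if w: "w \<in> nbrs c" for w
  proof (rule ccontr)
    assume big: "\<not> card (branch c w) \<le> card V div 2"
    have e: "{c, w} \<in> E" and wV: "w \<in> V"
      using w nbrs_subset_V unfolding nbrs_def by auto
    have "card (branch w u) < card (branch c w)" if u: "u \<in> nbrs w" for u
    proof (cases "u = c")
      case True
      have "card (branch w c) + card (branch c w) = card (branch w c \<union> branch c w)"
        using branches_across_edge_disjoint[OF e] finite_branch
        by (simp add: card_Un_disjoint Int_commute)
      also have "\<dots> \<le> card V"
        using branch_subset_V finite_V by (intro card_mono) auto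
      moreover have "card V \<le> 2 * (card V div 2) + 1"
        by presburger
      ultimately show ?thesis
        using big unfolding True by linarith
    next
      case False
      with u have "u \<in> children c w"
        unfolding children_def by simp
      then show ?thesis
        using card_child_branch_less[OF wV] by blast
    qed
    then have "\<mu> w < card (branch c w)"
      unfolding \<mu>_def using finite_nbrs big by (subst Max_less_iff) auto
    with min[OF wV] \<mu>_ge[OF w] show False
      by linarith
  qed
  with c that show ?thesis
    by blast
qed

text \<open>The first argument is fuel: the recursion covers \<open>branch p v\<close> once it is at least
  \<open>card (branch p v)\<close>.\<close>

fun alternate_levels :: "nat \<Rightarrow> bool \<Rightarrow> 'a \<Rightarrow> 'a \<Rightarrow> 'a set" where
  "alternate_levels 0 b p v = {}"
| "alternate_levels (Suc l) b p v =
    (if b then {v} else {}) \<union> (\<Union>w\<in>children p v. alternate_levels l (\<not> b) v w)"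

lemma alternate_levels_subset: "v \<in> V \<Longrightarrow> alternate_levels l b p v \<subseteq> branch p v"
proof (induction l arbitrary: b p v)
  case (Suc l)
  have "alternate_levels l b' v w \<subseteq> branch p v" if "w \<in> children p v" for w b'
    using Suc.IH[OF children_in_V[OF that]] child_branch_subset[OF Suc.prems that] by blast
  then show ?case
    using root_in_branch[OF Suc.prems] by auto
qed simp

lemma root_in_alternate_levels: "v \<in> alternate_levels (Suc l) b p v \<longleftrightarrow> b"
proof -
  have "v \<notin> alternate_levels l (\<not> b) v w" if "w \<in> children p v" for w
    using alternate_levels_subset[OF children_in_V[OF that]] root_notin_child_branch[OF that]
    by blast
  then show ?thesis
    by auto
qed

lemma alternate_levels_in_child_branch:
  assumes "w \<in> children p v" "z \<in> branch v w"
  shows "z \<in> alternate_levels (Suc l) b p v \<longleftrightarrow> z \<in> alternate_levels l (\<not> b) v w"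
proof -
  have "z \<noteq> v"
    using assms root_notin_child_branch by blast
  moreover have "z \<notin> alternate_levels l b' v w'" if "w' \<in> children p v" "w' \<noteq> w" for w' b'
    using alternate_levels_subset[OF children_in_V[OF that(1)]]
      child_branches_disjoint[OF that(1) assms(1) that(2)] assms(2) by blast
  ultimately show ?thesis
    using assms(1) by auto
qed

lemma alternate_levels_proper:
  assumes "v \<in> V" "card (branch p v) \<le> l" "{x, y} \<in> E" "{x, y} \<subseteq> branch p v"
  shows "x \<in> alternate_levels l b p v \<longleftrightarrow> y \<notin> alternate_levels l b p v"
  using assms
proof (induction l arbitrary: b p v x y)
  case 0
  then show ?case
    using root_in_branch[of v p] finite_branch[of p v] by (simp add: card_eq_0_iff)
next
  case (Suc l)
  from Suc.prems(1,3,4) show ?case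
  proof (cases rule: edge_in_branch_cases)
    case (1 w)
    have "card (branch v w) \<le> l"
      using card_child_branch_less[OF Suc.prems(1) 1(1)] Suc.prems(2) by simp
    then obtain l' where l: "l = Suc l'"
      using root_in_branch[OF children_in_V[OF 1(1)]] finite_branch
      by (cases l) (auto simp: card_eq_0_iff)
    have "w \<in> alternate_levels (Suc l) b p v \<longleftrightarrow> w \<in> alternate_levels l (\<not> b) v w"
      by (rule alternate_levels_in_child_branch[OF 1(1) root_in_branch[OF children_in_V[OF 1(1)]]])
    also have "\<dots> \<longleftrightarrow> \<not> b"
      unfolding l by (rule root_in_alternate_levels)
    finally have "w \<in> alternate_levels (Suc l) b p v \<longleftrightarrow> \<not> b" .
    moreover have "v \<in> alternate_levels (Suc l) b p v \<longleftrightarrow> b"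
      by (rule root_in_alternate_levels)
    moreover have "x = v \<and> y = w \<or> x = w \<and> y = v"
      using 1(2) by (simp add: doubleton_eq_iff)
    ultimately show ?thesis
      by blast
  next
    case (2 w)
    have "card (branch v w) \<le> l"
      using card_child_branch_less[OF Suc.prems(1) 2(1)] Suc.prems(2) by simp
    with 2 Suc.prems(3) show ?thesis
      using Suc.IH[OF children_in_V[OF 2(1)]]
        alternate_levels_in_child_branch[OF 2(1)] by auto
  qed
qed

lemma two_colouring:
  assumes "c \<in> V"
  obtains col where "\<And>x y. {x, y} \<in> E \<Longrightarrow> col x \<noteq> col y" "\<not> col c"
proof
  let ?A = "alternate_levels (card V) False c c"
  show "(x \<in> ?A) \<noteq> (y \<in> ?A)" if "{x, y} \<in> E" for x y
    using alternate_levels_proper[OF assms, of c "card V" x y False] that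
      edge_vertices[OF that] branch_self[OF assms] by auto
  obtain n where "card V = Suc n"
    using assms finite_V by (cases "card V") auto
  then show "c \<notin> ?A"
    using root_in_alternate_levels[of c n False c] by simp
qed

section \<open>Cutting off heaviest branches\<close>

definition heaviest_child :: "'a \<Rightarrow> 'a \<Rightarrow> 'a" where
  "heaviest_child p v =
    (SOME h. h \<in> children p v \<and> (\<forall>w\<in>children p v. card (branch v w) \<le> card (branch v h)))"

lemma heaviest_child:
  assumes "children p v \<noteq> {}"
  shows "heaviest_child p v \<in> children p v"
    and "w \<in> children p v \<Longrightarrow> card (branch v w) \<le> card (branch v (heaviest_child p v))"
proof -
  obtain w0 where "w0 \<in> children p v"
    using assms by blast
  moreover have "card (branch v w) < Suc (card V)" for w
    using card_mono[OF finite_V branch_subset_V] by (simp add: less_Suc_eq_le)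
  ultimately have "\<exists>h. h \<in> children p v \<and> (\<forall>w\<in>children p v. card (branch v w) \<le> card (branch v h))"
    using ex_has_greatest_nat[of "\<lambda>w. w \<in> children p v" w0 "\<lambda>w. card (branch v w)"] by blast
  then have "heaviest_child p v \<in> children p v \<and>
      (\<forall>w\<in>children p v. card (branch v w) \<le> card (branch v (heaviest_child p v)))"
    unfolding heaviest_child_def by (rule someI_ex)
  then show "heaviest_child p v \<in> children p v"
    and "w \<in> children p v \<Longrightarrow> card (branch v w) \<le> card (branch v (heaviest_child p v))"
    by auto
qed

definition cut_children :: "bool \<Rightarrow> 'a \<Rightarrow> 'a \<Rightarrow> 'a set" where
  "cut_children b p v = (if b \<and> children p v \<noteq> {} then {heaviest_child p v} else {})"

definition kept_children :: "bool \<Rightarrow> 'a \<Rightarrow> 'a \<Rightarrow> 'a set" where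
  "kept_children b p v = children p v - cut_children b p v"

lemma cut_children_subset: "cut_children b p v \<subseteq> children p v"
  unfolding cut_children_def using heaviest_child(1) by auto

lemma kept_children_subset: "kept_children b p v \<subseteq> children p v"
  unfolding kept_children_def by blast

lemma children_eq_kept_Un_cut: "children p v = kept_children b p v \<union> cut_children b p v"
  unfolding kept_children_def using cut_children_subset by blast

lemma kept_children_False [simp]: "kept_children False p v = children p v"
  unfolding kept_children_def cut_children_def by simp

lemma finite_kept_children: "finite (kept_children b p v)"
  using finite_children kept_children_subset by (rule finite_subset[rotated])

lemma cut_children_cases:
  obtains "cut_children b p v = {}"
    | h where "b" "cut_children b p v = {h}" "h \<in> children p v" "h \<notin> kept_children b p v"
proof (cases "b \<and> children p v \<noteq> {}")
  case True
  then show ?thesis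
    using that(2)[of "heaviest_child p v"] heaviest_child(1)
    unfolding kept_children_def cut_children_def by auto
next
  case False
  then show ?thesis
    using that(1) unfolding cut_children_def by auto
qed

lemma sum_kept_children_le:
  assumes "max_degree_le V E D" "v \<in> V"
  shows "real (\<Sum>w\<in>kept_children b p v. card (branch v w))
    \<le> (1 - 1 / real D) ^ (if b then 1 else 0) * real (\<Sum>w\<in>children p v. card (branch v w))"
proof (cases "b \<and> children p v \<noteq> {}")
  case True
  let ?h = "heaviest_child p v" and ?f = "\<lambda>w. card (branch v w)"
  let ?S = "\<Sum>w\<in>children p v. ?f w"
  have split: "children p v = insert ?h (kept_children b p v)" "?h \<notin> kept_children b p v"
    using True heaviest_child(1) unfolding kept_children_def cut_children_def by auto
  have D_pos: "0 < D"
    using card_children_le[OF assms, of p] True finite_children[of p v]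
    by (metis card_gt_0_iff order.strict_trans2)
  have "?S \<le> card (children p v) * ?f ?h"
    using sum_bounded_above[of "children p v" ?f "?f ?h"] heaviest_child(2)[OF conjunct2[OF True]]
    by simp
  also have "\<dots> \<le> D * ?f ?h"
    using card_children_le[OF assms] by simp
  finally have "real ?S \<le> real D * real (?f ?h)"
    by (metis of_nat_le_iff of_nat_mult)
  then have "real ?S / real D \<le> real (?f ?h)"
    using D_pos by (simp add: divide_le_eq mult.commute)
  moreover have "real ?S = real (?f ?h) + real (\<Sum>w\<in>kept_children b p v. ?f w)"
    unfolding split(1) using split(2) finite_kept_children by simp
  moreover have "(1 - 1 / real D) ^ (if b then 1 else 0) * real ?S = real ?S - real ?S / real D"
    using True by (simp add: algebra_simps)
  ultimately show ?thesis
    by linarith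
next
  case False
  then have "kept_children b p v = children p v"
    unfolding kept_children_def cut_children_def by auto
  then show ?thesis
    using False by auto
qed

lemma card_insert_UN_le:
  assumes "finite A"
  shows "card (insert v (\<Union>w\<in>A. f w)) \<le> 1 + (\<Sum>w\<in>A. card (f w))"
proof -
  have "card (insert v (\<Union>w\<in>A. f w)) \<le> 1 + card (\<Union>w\<in>A. f w)"
    by (cases "finite (\<Union>w\<in>A. f w)") (simp_all add: card_insert_if)
  also have "\<dots> \<le> 1 + (\<Sum>w\<in>A. card (f w))"
    using card_UN_le[OF assms] by simp
  finally show ?thesis .
qed

text \<open>Descending \<open>l\<close> levels from \<open>v\<close> (whose parent is \<open>p\<close>), \<open>b\<close> alternates between levels; where
  it holds, the heaviest child branch goes to the forest part and its edge to the matching part.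
  The tree part keeps everything else, including all branches below depth \<open>l\<close>; the core part
  is its top \<open>l\<close> levels.\<close>

fun tree_part :: "nat \<Rightarrow> bool \<Rightarrow> 'a \<Rightarrow> 'a \<Rightarrow> 'a set" where
  "tree_part 0 b p v = branch p v"
| "tree_part (Suc l) b p v = insert v (\<Union>w\<in>kept_children b p v. tree_part l (\<not> b) v w)"

fun forest_part :: "nat \<Rightarrow> bool \<Rightarrow> 'a \<Rightarrow> 'a \<Rightarrow> 'a set" where
  "forest_part 0 b p v = {}"
| "forest_part (Suc l) b p v =
    (\<Union>h\<in>cut_children b p v. branch v h) \<union> (\<Union>w\<in>kept_children b p v. forest_part l (\<not> b) v w)"

fun matching_part :: "nat \<Rightarrow> bool \<Rightarrow> 'a \<Rightarrow> 'a \<Rightarrow> 'a set set" where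
  "matching_part 0 b p v = {}"
| "matching_part (Suc l) b p v =
    (\<Union>h\<in>cut_children b p v. {{v, h}}) \<union> (\<Union>w\<in>kept_children b p v. matching_part l (\<not> b) v w)"

fun core_part :: "nat \<Rightarrow> bool \<Rightarrow> 'a \<Rightarrow> 'a \<Rightarrow> 'a set" where
  "core_part 0 b p v = {}"
| "core_part (Suc l) b p v = insert v (\<Union>w\<in>kept_children b p v. core_part l (\<not> b) v w)"

lemma root_in_tree_part: "v \<in> V \<Longrightarrow> v \<in> tree_part l b p v"
  by (cases l) (simp_all add: root_in_branch)

lemma tree_part_Un_forest_part:
  "v \<in> V \<Longrightarrow> tree_part l b p v \<union> forest_part l b p v = branch p v"
proof (induction l arbitrary: b p v)
  case (Suc l)
  have "branch p v =
      insert v ((\<Union>w\<in>kept_children b p v. branch v w) \<union> (\<Union>h\<in>cut_children b p v. branch v h))"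
    using branch_decomp[OF Suc.prems, of p] children_eq_kept_Un_cut[of p v b] by simp
  moreover have "branch v w = tree_part l (\<not> b) v w \<union> forest_part l (\<not> b) v w"
    if "w \<in> kept_children b p v" for w
    using Suc.IH[OF children_in_V] kept_children_subset that by blast
  ultimately show ?case
    by auto
qed simp

lemma tree_part_subset_branch: "v \<in> V \<Longrightarrow> tree_part l b p v \<subseteq> branch p v"
  using tree_part_Un_forest_part by blast

lemma forest_part_subset_branch: "v \<in> V \<Longrightarrow> forest_part l b p v \<subseteq> branch p v"
  using tree_part_Un_forest_part by blast

lemma tree_part_forest_part_disjoint:
  "v \<in> V \<Longrightarrow> tree_part l b p v \<inter> forest_part l b p v = {}"
proof (induction l arbitrary: b p v)
  case (Suc l)
  have kept: "w \<in> children p v" "w \<in> V" if "w \<in> kept_children b p v" for w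
    using that kept_children_subset children_in_V by blast+
  have "v \<notin> forest_part (Suc l) b p v"
    using root_notin_child_branch forest_part_subset_branch kept cut_children_subset by fastforce
  moreover have "x \<notin> forest_part (Suc l) b p v"
    if w: "w \<in> kept_children b p v" and x: "x \<in> tree_part l (\<not> b) v w" for w x
  proof -
    have xw: "x \<in> branch v w"
      using x tree_part_subset_branch[OF kept(2)[OF w]] by blast
    have "x \<notin> branch v h" if "h \<in> cut_children b p v" for h
      using xw child_branches_disjoint[OF kept(1)[OF w] subsetD[OF cut_children_subset that]] w that
      unfolding kept_children_def by blast
    moreover have "x \<notin> forest_part l (\<not> b) v w'" if "w' \<in> kept_children b p v" for w'
    proof (cases "w' = w")
      case True
      then show ?thesis
        using Suc.IH[OF kept(2)[OF w]] x by blast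
    next
      case False
      then show ?thesis
        using xw forest_part_subset_branch[OF kept(2)[OF that]]
          child_branches_disjoint[OF kept(1)[OF w] kept(1)[OF that]] by blast
    qed
    ultimately show ?thesis
      by simp
  qed
  ultimately show ?case
    by auto
qed simp

lemma edge_in_parts:
  assumes "v \<in> V" "e \<in> E" "e \<subseteq> branch p v"
  shows "e \<subseteq> tree_part l b p v \<or> e \<subseteq> forest_part l b p v \<or> e \<in> matching_part l b p v"
  using assms
proof (induction l arbitrary: b p v)
  case (Suc l)
  from Suc.prems show ?case
  proof (cases rule: edge_in_branch_cases)
    case (1 w)
    show ?thesis
    proof (cases "w \<in> kept_children b p v")
      case True
      then have "w \<in> tree_part (Suc l) b p v"
        using root_in_tree_part[OF children_in_V[OF 1(1)]] by auto
      then show ?thesis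
        using 1(2) by simp
    next
      case False
      then have "w \<in> cut_children b p v"
        using 1(1) children_eq_kept_Un_cut by blast
      then have "e \<in> matching_part (Suc l) b p v"
        using 1(2) by auto
      then show ?thesis
        by blast
    qed
  next
    case (2 w)
    show ?thesis
    proof (cases "w \<in> kept_children b p v")
      case True
      then show ?thesis
        using Suc.IH[OF children_in_V[OF 2(1)] Suc.prems(2) 2(2), of "\<not> b"] by auto
    next
      case False
      then have "w \<in> cut_children b p v"
        using 2(1) children_eq_kept_Un_cut by blast
      then show ?thesis
        using 2(2) by auto
    qed
  qed
qed simp

lemma tree_part_connected:
  "v \<in> V \<Longrightarrow> x \<in> tree_part l b p v \<Longrightarrow> reach {e \<in> E. e \<subseteq> tree_part l b p v} v x"
proof (induction l arbitrary: b p v x)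
  case 0
  then show ?case
    using branch_connected by simp
next
  case (Suc l)
  show ?case
    unfolding tree_part.simps
  proof (rule reach_insert_UN)
    show "x \<in> insert v (\<Union>w\<in>kept_children b p v. tree_part l (\<not> b) v w)"
      using Suc.prems(2) by simp
    fix w assume w: "w \<in> kept_children b p v"
    then show "{v, w} \<in> E"
      using kept_children_subset children_edge by blast
    show "reach {e \<in> E. e \<subseteq> tree_part l (\<not> b) v w} w y" if "y \<in> tree_part l (\<not> b) v w" for y
      using w kept_children_subset children_in_V that by (blast intro: Suc.IH)
  qed
qed

lemma core_part_connected:
  "v \<in> V \<Longrightarrow> x \<in> core_part l b p v \<Longrightarrow> reach {e \<in> E. e \<subseteq> core_part l b p v} v x"
proof (induction l arbitrary: b p v x)
  case (Suc l)
  show ?case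
    unfolding core_part.simps
  proof (rule reach_insert_UN)
    show "x \<in> insert v (\<Union>w\<in>kept_children b p v. core_part l (\<not> b) v w)"
      using Suc.prems(2) by simp
    fix w assume w: "w \<in> kept_children b p v"
    then show "{v, w} \<in> E"
      using kept_children_subset children_edge by blast
    show "reach {e \<in> E. e \<subseteq> core_part l (\<not> b) v w} w y" if "y \<in> core_part l (\<not> b) v w" for y
      using w kept_children_subset children_in_V that by (blast intro: Suc.IH)
  qed
qed simp

lemma core_part_subset_tree_part: "core_part l b p v \<subseteq> tree_part l b p v"
  by (induction l arbitrary: b p v) fastforce+

lemma card_core_part_Suc_le:
  assumes "\<And>w. w \<in> children p v \<Longrightarrow> card (core_part l (\<not> b) v w) \<le> N"
  shows "card (core_part (Suc l) b p v) \<le> 1 + card (children p v) * N"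
proof -
  have "card (core_part (Suc l) b p v) \<le> 1 + (\<Sum>w\<in>kept_children b p v. card (core_part l (\<not> b) v w))"
    unfolding core_part.simps using finite_kept_children by (rule card_insert_UN_le)
  also have "\<dots> \<le> 1 + card (kept_children b p v) * N"
    using sum_bounded_above[of "kept_children b p v" "\<lambda>w. card (core_part l (\<not> b) v w)" N]
      assms kept_children_subset by (simp add: subset_iff)
  also have "\<dots> \<le> 1 + card (children p v) * N"
    using card_mono[OF finite_children kept_children_subset] by simp
  finally show ?thesis .
qed

lemma card_core_part_le:
  assumes "max_degree_le V E D" "{p, v} \<in> E"
  shows "card (core_part l b p v) \<le> D ^ l"
  using assms(2)
proof (induction l arbitrary: b p v)
  case (Suc l)
  have "card (core_part (Suc l) b p v) \<le> 1 + card (children p v) * D ^ l"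
    using Suc.IH[OF children_edge] by (rule card_core_part_Suc_le)
  also have "\<dots> \<le> D ^ Suc l"
  proof -
    have "card (children p v) + 1 \<le> D"
      using card_children_less[OF assms(1) Suc.prems] by simp
    moreover from this have "1 \<le> D ^ l"
      by simp
    ultimately have "1 + card (children p v) * D ^ l \<le> (card (children p v) + 1) * D ^ l"
      by simp
    also have "\<dots> \<le> D * D ^ l"
      using \<open>card (children p v) + 1 \<le> D\<close> by (rule mult_right_mono) simp
    finally show ?thesis
      by simp
  qed
  finally show ?case .
qed simp

lemma card_core_part_root_le:
  assumes "max_degree_le V E D" "2 \<le> D" "v \<in> V"
  shows "card (core_part l b v v) \<le> D ^ Suc l"
proof (cases l)
  case (Suc l')
  have "card (core_part (Suc l') b v v) \<le> 1 + card (children v v) * D ^ l'"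
    using card_core_part_le[OF assms(1) children_edge] by (rule card_core_part_Suc_le)
  also have "\<dots> \<le> 1 + D * D ^ l'"
    using card_children_le[OF assms(1,3)] by simp
  also have "\<dots> \<le> D * (D * D ^ l')"
  proof -
    have "1 \<le> D * D ^ l'"
      using assms(2) by simp
    moreover have "2 * (D * D ^ l') \<le> D * (D * D ^ l')"
      using assms(2) by (rule mult_right_mono) simp
    ultimately show ?thesis
      by linarith
  qed
  finally show ?thesis
    unfolding Suc by simp
qed simp

lemma forest_part_pieces:
  "v \<in> V \<Longrightarrow> x \<in> forest_part l b p v \<Longrightarrow>
    \<exists>a h. {a, h} \<in> E \<and> a \<in> tree_part l b p v \<and> x \<in> branch a h \<and> branch a h \<subseteq> forest_part l b p v"
proof (induction l arbitrary: b p v)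
  case (Suc l)
  from Suc.prems(2) consider h where "h \<in> cut_children b p v" "x \<in> branch v h"
    | w where "w \<in> kept_children b p v" "x \<in> forest_part l (\<not> b) v w"
    by auto
  then show ?case
  proof cases
    case 1
    then have "{v, h} \<in> E" "branch v h \<subseteq> forest_part (Suc l) b p v"
      using children_edge[OF subsetD[OF cut_children_subset]] by auto
    with 1 show ?thesis
      using root_in_tree_part[OF Suc.prems(1)] by blast
  next
    case 2
    then obtain a h where "{a, h} \<in> E" "a \<in> tree_part l (\<not> b) v w" "x \<in> branch a h"
        "branch a h \<subseteq> forest_part l (\<not> b) v w"
      using Suc.IH[OF children_in_V] kept_children_subset by blast
    with 2(1) show ?thesis
      by (intro exI[of _ a] exI[of _ h]) auto
  qed
qed simp

lemma matching_part_edge: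
  "v \<in> V \<Longrightarrow> e \<in> matching_part l b p v \<Longrightarrow>
    \<exists>a h. e = {a, h} \<and> e \<in> E \<and> a \<in> core_part l b p v \<and> h \<in> forest_part l b p v"
proof (induction l arbitrary: b p v)
  case (Suc l)
  from Suc.prems(2) consider h where "h \<in> cut_children b p v" "e = {v, h}"
    | w where "w \<in> kept_children b p v" "e \<in> matching_part l (\<not> b) v w"
    by auto
  then show ?case
  proof cases
    case 1
    then have "h \<in> children p v"
      using cut_children_subset by blast
    then have "e \<in> E" "h \<in> branch v h"
      using 1(2) children_edge root_in_branch[OF children_in_V] by auto
    with 1 show ?thesis
      by auto
  next
    case 2
    then obtain a h where
        "e = {a, h}" "e \<in> E" "a \<in> core_part l (\<not> b) v w" "h \<in> forest_part l (\<not> b) v w"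
      using Suc.IH[OF children_in_V] kept_children_subset by blast
    with 2(1) show ?thesis
      by (intro exI[of _ a] exI[of _ h]) auto
  qed
qed simp

lemma matching_part_subset_branch:
  assumes "v \<in> V"
  shows "\<Union>(matching_part l b p v) \<subseteq> branch p v"
proof
  fix x assume "x \<in> \<Union>(matching_part l b p v)"
  then obtain e where e: "e \<in> matching_part l b p v" "x \<in> e"
    by blast
  then obtain a h where "e = {a, h}" "a \<in> core_part l b p v" "h \<in> forest_part l b p v"
    using matching_part_edge[OF assms] by blast
  with e(2) show "x \<in> branch p v"
    using core_part_subset_tree_part tree_part_subset_branch[OF assms]
      forest_part_subset_branch[OF assms] by blast
qed

lemma matching_part_is_matching: "v \<in> V \<Longrightarrow> matching (matching_part l b p v)"
proof (induction l arbitrary: b p v)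
  case 0
  then show ?case
    unfolding matching_def by simp
next
  case (Suc l)
  let ?M = "\<Union>w\<in>kept_children b p v. matching_part l (\<not> b) v w"
  have M: "matching ?M"
  proof (rule matching_UN_disjoint)
    fix w assume "w \<in> kept_children b p v"
    then have "w \<in> children p v"
      using kept_children_subset by blast
    then show "matching (matching_part l (\<not> b) v w)" "\<Union>(matching_part l (\<not> b) v w) \<subseteq> branch v w"
      using Suc.IH matching_part_subset_branch children_in_V by blast+
  next
    fix w w' assume "w \<in> kept_children b p v" "w' \<in> kept_children b p v" "w \<noteq> w'"
    then show "branch v w \<inter> branch v w' = {}"
      using kept_children_subset child_branches_disjoint by blast
  qed
  show ?case
  proof (cases rule: cut_children_cases[of b p v])
    case 1
    with M show ?thesis
      by simp
  next
    case (2 h)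
    then have h: "cut_children b p v = {h}" "h \<in> children p v" "h \<notin> kept_children b p v"
      by simp_all
    have "v \<notin> branch v w" "h \<notin> branch v w" if "w \<in> kept_children b p v" for w
    proof -
      have w: "w \<in> children p v" "w \<noteq> h"
        using that h(3) kept_children_subset by blast+
      then show "v \<notin> branch v w"
        using root_notin_child_branch by blast
      show "h \<notin> branch v w"
        using child_branches_disjoint[OF w(1) h(2) w(2)] root_in_branch[OF children_in_V[OF h(2)]]
        by blast
    qed
    then have "{v, h} \<inter> \<Union>?M = {}"
      using matching_part_subset_branch children_in_V kept_children_subset by blast
    with M h(1) show ?thesis
      by (simp add: matching_insert)
  qed
qed

lemma matching_part_colour:
  assumes "\<And>x y. {x, y} \<in> E \<Longrightarrow> col x \<noteq> col y"
  shows "v \<in> V \<Longrightarrow> col v = b \<Longrightarrow> e \<in> matching_part l b p v \<Longrightarrow> a \<in> e \<Longrightarrow>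
    a \<notin> forest_part l b p v \<Longrightarrow> col a"
proof (induction l arbitrary: b p v)
  case (Suc l)
  from Suc.prems(3) consider h where "h \<in> cut_children b p v" "e = {v, h}"
    | w where "w \<in> kept_children b p v" "e \<in> matching_part l (\<not> b) v w"
    by auto
  then show ?case
  proof cases
    case 1
    have "h \<in> branch v h"
      using root_in_branch[OF children_in_V] cut_children_subset 1(1) by blast
    then have "h \<in> forest_part (Suc l) b p v"
      using 1(1) by auto
    then have "a = v"
      using 1(2) Suc.prems(4,5) by blast
    moreover have "b"
      using 1(1) by (cases rule: cut_children_cases[of b p v]) auto
    ultimately show ?thesis
      using Suc.prems(2) by simp
  next
    case 2
    then have "w \<in> children p v"
      using kept_children_subset by blast
    then have "col w = (\<not> b)"
      using assms[OF children_edge] Suc.prems(2) by blast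
    with 2 Suc.prems(4,5) show ?thesis
      using Suc.IH[OF children_in_V[OF \<open>w \<in> children p v\<close>]] by auto
  qed
qed simp

lemma matched_tree_part_vertex:
  assumes "v \<in> V" "\<And>x y. {x, y} \<in> E \<Longrightarrow> col x \<noteq> col y" "col v = b"
    and "x \<in> \<Union>(matching_part l b p v)" "x \<in> tree_part l b p v"
  shows "x \<in> core_part l b p v" and "col x"
proof -
  obtain e where e: "e \<in> matching_part l b p v" "x \<in> e"
    using assms(4) by blast
  have x: "x \<notin> forest_part l b p v"
    using assms(5) tree_part_forest_part_disjoint[OF assms(1)] by blast
  obtain a h where "e = {a, h}" "a \<in> core_part l b p v" "h \<in> forest_part l b p v"
    using matching_part_edge[OF assms(1) e(1)] by blast
  with e(2) x show "x \<in> core_part l b p v"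
    by blast
  show "col x"
    using matching_part_colour[where col = col, OF assms(2) assms(1,3) e x] .
qed

lemma tree_tree_part:
  assumes "v \<in> V"
  shows "tree (tree_part l b p v) {e \<in> E. e \<subseteq> tree_part l b p v}"
proof (rule tree_induced[OF forest])
  show "tree_part l b p v \<subseteq> V"
    using tree_part_subset_branch[OF assms] branch_subset_V by blast
  show "v \<in> tree_part l b p v"
    using assms by (rule root_in_tree_part)
qed (rule tree_part_connected[OF assms])

lemma tree_core_part:
  assumes "v \<in> V"
  shows "tree (core_part (Suc l) b p v) {e \<in> E. e \<subseteq> core_part (Suc l) b p v}"
proof (rule tree_induced[OF forest])
  show "core_part (Suc l) b p v \<subseteq> V"
    using core_part_subset_tree_part tree_part_subset_branch[OF assms] branch_subset_V by blast
  show "v \<in> core_part (Suc l) b p v"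
    by simp
qed (rule core_part_connected[OF assms])

lemma min_subtree_card_tree_part_le:
  assumes "v \<in> V" "X \<subseteq> core_part (Suc l) b p v"
  shows "min_subtree_card (tree_part (Suc l) b p v) {e \<in> E. e \<subseteq> tree_part (Suc l) b p v} X
    \<le> card (core_part (Suc l) b p v)"
proof (rule min_subtree_card_le)
  show "tree (core_part (Suc l) b p v) {e \<in> E. e \<subseteq> core_part (Suc l) b p v}"
    using assms(1) by (rule tree_core_part)
  have "core_part (Suc l) b p v \<subseteq> V"
    using core_part_subset_tree_part tree_part_subset_branch[OF assms(1)] branch_subset_V by blast
  then show "subgraph (core_part (Suc l) b p v) {e \<in> E. e \<subseteq> core_part (Suc l) b p v}
      (tree_part (Suc l) b p v) {e \<in> E. e \<subseteq> tree_part (Suc l) b p v}"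
    unfolding subgraph_def using core_part_subset_tree_part ugraph_induced[OF ugraph] by blast
qed (rule assms(2))

text \<open>\<open>(if b then Suc l else l) div 2\<close> is the number of cutting levels among the top \<open>l\<close>.\<close>

lemma card_tree_part_le:
  assumes "max_degree_le V E D" "v \<in> V"
  shows "real (card (tree_part l b p v))
    \<le> (1 - 1 / real D) ^ ((if b then Suc l else l) div 2) * real (card (branch p v))
      + real (D + 1) ^ l"
  using assms(2)
proof (induction l arbitrary: b p v)
  case (Suc l)
  define \<rho> where "\<rho> = 1 - 1 / real D"
  define \<theta> where "\<theta> = \<rho> ^ ((if \<not> b then Suc l else l) div 2)"
  have "0 \<le> \<rho>"
    unfolding \<rho>_def by (cases D) auto
  then have "0 \<le> \<theta>"
    unfolding \<theta>_def by simp
  let ?K = "kept_children b p v"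
  have "card (tree_part (Suc l) b p v) \<le> 1 + (\<Sum>w\<in>?K. card (tree_part l (\<not> b) v w))"
    unfolding tree_part.simps using finite_kept_children by (rule card_insert_UN_le)
  then have "real (card (tree_part (Suc l) b p v))
      \<le> 1 + (\<Sum>w\<in>?K. real (card (tree_part l (\<not> b) v w)))"
    by (metis of_nat_1 of_nat_add of_nat_le_iff of_nat_sum)
  also have "\<dots> \<le> 1 + (\<Sum>w\<in>?K. \<theta> * real (card (branch v w)) + real (D + 1) ^ l)"
    using Suc.IH[OF children_in_V] kept_children_subset
    unfolding \<theta>_def \<rho>_def by (intro add_left_mono sum_mono) blast
  also have "\<dots> = \<theta> * real (\<Sum>w\<in>?K. card (branch v w)) + (1 + real (card ?K) * real (D + 1) ^ l)"
    by (simp add: sum.distrib sum_distrib_left)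
  also have "\<dots> \<le> \<rho> ^ ((if b then Suc (Suc l) else Suc l) div 2) * real (card (branch p v))
      + real (D + 1) ^ Suc l"
  proof (rule add_mono)
    have "\<theta> * real (\<Sum>w\<in>?K. card (branch v w))
        \<le> \<theta> * (\<rho> ^ (if b then 1 else 0) * real (\<Sum>w\<in>children p v. card (branch v w)))"
      using sum_kept_children_le[OF assms(1) Suc.prems] \<open>0 \<le> \<theta>\<close>
      unfolding \<rho>_def by (rule mult_left_mono)
    also have "\<dots> \<le> \<theta> * (\<rho> ^ (if b then 1 else 0) * real (card (branch p v)))"
      using card_branch[OF Suc.prems, of p] \<open>0 \<le> \<theta>\<close> \<open>0 \<le> \<rho>\<close>
      by (intro mult_left_mono) simp_all
    also have "\<dots> = \<rho> ^ ((if b then Suc (Suc l) else Suc l) div 2) * real (card (branch p v))"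
      unfolding \<theta>_def by (cases b) (simp_all add: mult_ac)
    finally show "\<theta> * real (\<Sum>w\<in>?K. card (branch v w))
        \<le> \<rho> ^ ((if b then Suc (Suc l) else Suc l) div 2) * real (card (branch p v))" .
    have "card ?K \<le> D"
      using card_mono[OF finite_children kept_children_subset]
        card_children_le[OF assms(1) Suc.prems]
      by (metis order_trans)
    then show "1 + real (card ?K) * real (D + 1) ^ l \<le> real (D + 1) ^ Suc l"
      by (rule one_plus_mult_power_le)
  qed
  finally show ?case
    unfolding \<rho>_def .
qed simp

lemma card_tree_part_root_le_half:
  assumes "max_degree_le V E D" "2 \<le> D" "v \<in> V" "4 * (D + 1) ^ (4 * D) + 4 \<le> card V"
  shows "card (tree_part (4 * D) False v v) \<le> card V div 2"
proof -
  have "(1 - 1 / real D) ^ (4 * D div 2) = ((1 - 1 / real D) ^ D) ^ 2"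
    by (simp flip: power_mult add: mult.commute)
  also have "\<dots> \<le> (1 / 2) ^ 2"
    using one_minus_inverse_power_le_half[of D] assms(2) by (intro power_mono) simp_all
  finally have quarter: "(1 - 1 / real D) ^ (4 * D div 2) \<le> 1 / 4"
    by (simp add: power2_eq_square)
  have "real (card (tree_part (4 * D) False v v))
      \<le> (1 - 1 / real D) ^ (4 * D div 2) * real (card V) + real (D + 1) ^ (4 * D)"
    using card_tree_part_le[OF assms(1,3), of "4 * D" False v] branch_self[OF assms(3)] by simp
  also have "\<dots> \<le> 1 / 4 * real (card V) + real (D + 1) ^ (4 * D)"
    using quarter by (intro add_right_mono mult_right_mono) simp_all
  finally have "real (card (tree_part (4 * D) False v v))
      \<le> real (card V) / 4 + real (D + 1) ^ (4 * D)"
    by simp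
  moreover have "4 * real (D + 1) ^ (4 * D) + 4 \<le> real (card V)"
    using of_nat_mono[OF assms(4)] by simp
  moreover have "real (card V) \<le> 2 * real (card V div 2) + 1"
    by linarith
  ultimately show ?thesis
    by linarith
qed

lemma component_subset_branch:
  assumes "x \<in> branch a h" "a \<notin> F" "EF \<subseteq> {e \<in> E. e \<subseteq> F}"
  shows "component F EF x \<subseteq> branch a h"
proof
  fix u assume "u \<in> component F EF x"
  then have "reach EF x u"
    unfolding component_def by simp
  then show "u \<in> branch a h"
  proof (rule reach_closed_set)
    fix z y assume z: "z \<in> branch a h" and zy: "{z, y} \<in> EF"
    then have "{z, y} \<in> E" "{z, y} \<noteq> {a, h}"
      using assms(2,3) by auto
    then show "y \<in> branch a h"
      by (rule branch_closed[OF z])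
  qed (rule assms(1))
qed

lemma card_component_forest_part_root_le:
  assumes "v \<in> V" "\<And>w. w \<in> nbrs v \<Longrightarrow> card (branch v w) \<le> n" "x \<in> forest_part l False v v"
  shows "card (component (forest_part l False v v) {e \<in> E. e \<subseteq> forest_part l False v v} x) \<le> n"
proof (cases l)
  case (Suc l')
  let ?F = "forest_part l False v v"
  from assms(3) obtain w where w: "w \<in> nbrs v" "x \<in> forest_part l' True v w"
    unfolding Suc by (auto simp: children_self cut_children_def)
  then have wV: "w \<in> V"
    using nbrs_subset_V by blast
  then obtain a h where ah: "{a, h} \<in> E" "a \<in> tree_part l' True v w" "x \<in> branch a h"
      "branch a h \<subseteq> forest_part l' True v w"
    using forest_part_pieces w(2) by blast
  have "a \<in> tree_part l False v v"
    using ah(2) w(1) unfolding Suc by (auto simp: children_self)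
  then have "a \<notin> ?F"
    using tree_part_forest_part_disjoint[OF assms(1)] by blast
  then have "card (component ?F {e \<in> E. e \<subseteq> ?F} x) \<le> card (branch a h)"
    using component_subset_branch[OF ah(3)] finite_branch by (simp add: card_mono)
  also have "\<dots> \<le> card (branch v w)"
    using ah(4) forest_part_subset_branch[OF wV] finite_branch by (meson card_mono order_trans)
  also have "\<dots> \<le> n"
    using assms(2) w(1) by blast
  finally show ?thesis .
qed (use assms(3) in simp)

lemma root_split_partition:
  fixes l :: nat and b :: bool
  assumes "c \<in> V"
  defines "S \<equiv> tree_part l b c c" and "F \<equiv> forest_part l b c c" and "M \<equiv> matching_part l b c c"
  shows "S \<union> F = V" and "S \<inter> F = {}" and "M \<subseteq> E"
    and "M \<union> {e \<in> E. e \<subseteq> S} \<union> {e \<in> E. e \<subseteq> F} = E"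
    and "M \<inter> {e \<in> E. e \<subseteq> S} = {}" and "M \<inter> {e \<in> E. e \<subseteq> F} = {}"
    and "{e \<in> E. e \<subseteq> S} \<inter> {e \<in> E. e \<subseteq> F} = {}"
    and "\<forall>e\<in>M. card (e \<inter> S) = 1 \<and> card (e \<inter> F) = 1"
proof -
  show SF: "S \<union> F = V" "S \<inter> F = {}"
    unfolding S_def F_def
    using tree_part_Un_forest_part[OF assms(1)] tree_part_forest_part_disjoint[OF assms(1)]
    by (simp_all add: branch_self[OF assms(1)])
  have M_edge: "\<exists>a h. e = {a, h} \<and> e \<in> E \<and> a \<in> S \<and> h \<in> F" if "e \<in> M" for e
    using matching_part_edge[OF assms(1) that[unfolded M_def]] core_part_subset_tree_part[of l b c c]
    unfolding S_def F_def by blast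
  then show "M \<subseteq> E"
    by blast
  have edges: "e \<subseteq> S \<or> e \<subseteq> F \<or> e \<in> M" if "e \<in> E" for e
  proof -
    have "e \<subseteq> branch c c"
      using that branch_self[OF assms(1)] by (auto elim: edge_cases)
    then show ?thesis
      using edge_in_parts[OF assms(1) that] unfolding S_def F_def M_def by blast
  qed
  have "{} \<notin> E"
    by (auto elim: edge_cases)
  note split = split_edges_by_sides[OF SF(2) this edges M_edge]
  then show "M \<union> {e \<in> E. e \<subseteq> S} \<union> {e \<in> E. e \<subseteq> F} = E"
    and "M \<inter> {e \<in> E. e \<subseteq> S} = {}" and "M \<inter> {e \<in> E. e \<subseteq> F} = {}"
    and "{e \<in> E. e \<subseteq> S} \<inter> {e \<in> E. e \<subseteq> F} = {}"
    and "\<forall>e\<in>M. card (e \<inter> S) = 1 \<and> card (e \<inter> F) = 1"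
    by blast+
qed

lemma card_V_le_two:
  assumes "max_degree_le V E 1"
  shows "card V \<le> 2"
proof -
  obtain c where c: "c \<in> V" and centroid: "\<And>w. w \<in> nbrs c \<Longrightarrow> card (branch c w) \<le> card V div 2"
    using centroid_exists by blast
  have "card V = 1 + (\<Sum>w\<in>nbrs c. card (branch c w))"
    using card_branch[OF c, of c] branch_self[OF c] children_self by simp
  also have "\<dots> \<le> 1 + card (nbrs c) * (card V div 2)"
    using sum_bounded_above[of "nbrs c" "\<lambda>w. card (branch c w)"] centroid by simp
  also have "\<dots> \<le> 1 + card V div 2"
    using card_nbrs_le[OF assms c] by simp
  finally show ?thesis
    by linarith
qed

lemma balanced_split:
  assumes deg: "max_degree_le V E D" and "2 \<le> D" and large: "4 * (D + 1) ^ (4 * D) + 4 \<le> card V"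
  shows "\<exists>M VS ES VF EF.
    matching M \<and> M \<subseteq> E \<and> tree VS ES \<and> subgraph VS ES V E \<and>
    forest VF EF \<and> subgraph VF EF V E \<and>
    M \<union> ES \<union> EF = E \<and> M \<inter> ES = {} \<and> M \<inter> EF = {} \<and> ES \<inter> EF = {} \<and>
    VS \<inter> VF = {} \<and>
    (\<forall>e\<in>M. card (e \<inter> VS) = 1 \<and> card (e \<inter> VF) = 1) \<and>
    card VS \<le> card V div 2 \<and>
    (\<forall>v\<in>VF. card (component VF EF v) \<le> card V div 2) \<and>
    same_bip_class V E (\<Union>M \<inter> VS) \<and>
    min_subtree_card VS ES (\<Union>M \<inter> VS) \<le> D ^ (4 * D + 1)"
proof -
  obtain c where c: "c \<in> V" and centroid: "\<And>w. w \<in> nbrs c \<Longrightarrow> card (branch c w) \<le> card V div 2"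
    using centroid_exists by blast
  obtain col where col: "\<And>x y. {x, y} \<in> E \<Longrightarrow> col x \<noteq> col y" "\<not> col c"
    using two_colouring[OF c] by blast
  obtain l where L: "4 * D = Suc l"
    using \<open>2 \<le> D\<close> by (cases "4 * D") auto
  define S where "S = tree_part (4 * D) False c c"
  define F where "F = forest_part (4 * D) False c c"
  define M where "M = matching_part (4 * D) False c c"
  define ES where "ES = {e \<in> E. e \<subseteq> S}"
  define EF where "EF = {e \<in> E. e \<subseteq> F}"
  note split = root_split_partition[OF c, of "4 * D" False, folded S_def F_def M_def, folded ES_def EF_def]
  have "S \<subseteq> V" "F \<subseteq> V"
    using split(1) by blast+
  have "tree S ES"
    unfolding ES_def S_def using c by (rule tree_tree_part)
  have "subgraph S ES V E"
    unfolding ES_def using ugraph \<open>S \<subseteq> V\<close> by (rule subgraph_induced)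
  have "forest F EF"
    unfolding EF_def using forest \<open>F \<subseteq> V\<close> by (rule forest_induced)
  have "subgraph F EF V E"
    unfolding EF_def using ugraph \<open>F \<subseteq> V\<close> by (rule subgraph_induced)
  have "matching M"
    unfolding M_def using c by (rule matching_part_is_matching)
  have "card S \<le> card V div 2"
    unfolding S_def using card_tree_part_root_le_half[OF deg \<open>2 \<le> D\<close> c large] .
  have "\<forall>x\<in>F. card (component F EF x) \<le> card V div 2"
    unfolding F_def EF_def using card_component_forest_part_root_le[OF c centroid] by blast
  have "col c = False"
    using col(2) by simp
  note matched = matched_tree_part_vertex[where col = col, OF c col(1) this, of _ "4 * D" c,
      folded M_def S_def]
  have "same_bip_class V E (\<Union>M \<inter> S)"
    unfolding same_bip_class_def using col(1) matched(2) by blast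
  have "min_subtree_card S ES (\<Union>M \<inter> S) \<le> card (core_part (4 * D) False c c)"
    using min_subtree_card_tree_part_le[OF c, of "\<Union>M \<inter> S" l False c] matched(1)
    unfolding ES_def S_def L by blast
  also have "\<dots> \<le> D ^ (4 * D + 1)"
    using card_core_part_root_le[OF deg \<open>2 \<le> D\<close> c] by simp
  finally have "min_subtree_card S ES (\<Union>M \<inter> S) \<le> D ^ (4 * D + 1)" .
  with split(2-) show ?thesis
    using \<open>matching M\<close> \<open>tree S ES\<close> \<open>subgraph S ES V E\<close> \<open>forest F EF\<close>
      \<open>subgraph F EF V E\<close> \<open>card S \<le> card V div 2\<close> \<open>\<forall>x\<in>F. card (component F EF x) \<le> card V div 2\<close>
      \<open>same_bip_class V E (\<Union>M \<inter> S)\<close>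
    by - (rule exI[of _ M], rule exI[of _ S], rule exI[of _ ES], rule exI[of _ F],
      rule exI[of _ EF], intro conjI; assumption)
qed

end

theorem lemma8p1:
  "\<forall>D::nat. \<exists>k0::nat. \<forall>k\<ge>k0. \<forall>(V::nat set) E.
     tree V E \<and> card E = k \<and> max_degree_le V E D \<longrightarrow>
     (\<exists>M VS ES VF EF.
        matching M \<and> M \<subseteq> E \<and> tree VS ES \<and> subgraph VS ES V E \<and>
        forest VF EF \<and> subgraph VF EF V E \<and>
        M \<union> ES \<union> EF = E \<and> M \<inter> ES = {} \<and> M \<inter> EF = {} \<and> ES \<inter> EF = {} \<and>
        VS \<inter> VF = {} \<and>
        (\<forall>e\<in>M. card (e \<inter> VS) = 1 \<and> card (e \<inter> VF) = 1) \<and>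
        card VS \<le> nat \<lceil>real k / 2\<rceil> \<and>
        (\<forall>v\<in>VF. card (component VF EF v) \<le> nat \<lceil>real k / 2\<rceil>) \<and>
        same_bip_class V E (\<Union>M \<inter> VS) \<and>
        min_subtree_card VS ES (\<Union>M \<inter> VS) \<le> D ^ (4 * D + 1))"
  (is "\<forall>D. \<exists>k0. \<forall>k\<ge>k0. \<forall>V E. ?hyps V E k D \<longrightarrow> ?split V E k D")
proof (intro allI)
  fix D :: nat
  have "?split V E k D" if large: "4 * (D + 1) ^ (4 * D) + 4 \<le> k" and hyps: "?hyps V E k D"
    for k and V :: "nat set" and E
  proof -
    interpret tree_graph V E
      using hyps by unfold_locales blast
    have "card V = k + 1" "max_degree_le V E D"
      using card_V_eq_card_E_plus_1 hyps by simp_all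
    moreover have "2 \<le> D"
    proof (rule ccontr)
      assume "\<not> 2 \<le> D"
      then have "max_degree_le V E 1"
        using \<open>max_degree_le V E D\<close> unfolding max_degree_le_def by fastforce
      with card_V_le_two \<open>card V = k + 1\<close> large show False
        by simp
    qed
    ultimately show ?thesis
      using balanced_split[of D] large unfolding nat_ceiling_half by simp
  qed
  then show "\<exists>k0. \<forall>k\<ge>k0. \<forall>V E. ?hyps V E k D \<longrightarrow> ?split V E k D"
    by blast
qed

end
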